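(* Let $H$ be a Hilbert space, $K$ a separable infinite-dimensional Hilbert space, $\mathcal{M}\subseteq \mathcal{P}_H$ a subspace lattice and $\mathcal{L}\subseteq \mathcal{P}_K$ a subspace lattice. For every family $(f_\alpha)_{\alpha\in\mathbb{A}}\subseteq m(\mathcal{M},\mathcal{L})$ we have $\theta\left(\bigvee_{\alpha\in\mathbb{A}} f_\alpha\right)=\bigvee_{\alpha\in\mathbb{A}}\theta(f_\alpha)$.
   Context: For a Hilbert space $X$, $\mathcal{P}_X$ denotes the set of orthogonal projections on $X$, a complete lattice under $\wedge$ (projection onto the intersection of ranges) and $\vee$ (projection onto the closed linear span of ranges). A subspace lattice on $X$ is a sublattice of $\mathcal{P}_X$ containing $0$ and $I$ and closed in the strong operator topology. For a set $\mathcal{E}\subseteq\mathcal{P}_H$ and a subspace lattice $\mathcal{L}\subseteq\mathcal{P}_K$, $m(\mathcal{E},\mathcal{L})$ is the set of all maps $\mathcal{E}\to\mathcal{L}$, a complete lattice under pointwise operations $(f\vee g)(E)=f(E)\vee g(E)$, $(f\wedge g)(E)=f(E)\wedge g(E)$ (and pointwise arbitrary joins/meets). The map $\theta: m(\mathcal{E},\mathcal{L})\to\mathcal{P}_{K\otimes H}$ is $\theta(f)=\bigvee\{f(E)\otimes E: E\in\mathcal{E}\}$; here $\mathcal{E}=\mathcal{M}$. *)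

theory Defs
  imports "HOL-Analysis.Analysis"
begin

text \<open>A complex Hilbert space H is modelled as a real Hilbert space (type class
  real_inner + complete_space, real inner product = real part of the complex one)
  together with a complex structure J (multiplication by the imaginary unit):
  J is real-linear, J (J x) = - x and J is orthogonal.\<close>

definition cplx_structure :: "('h::real_inner \<Rightarrow> 'h) \<Rightarrow> bool" where
  "cplx_structure J \<longleftrightarrow> linear J \<and> (\<forall>x. J (J x) = - x) \<and> (\<forall>x y. inner (J x) (J y) = inner x y)"

text \<open>Orthogonal projections on H are identified with their ranges, the closed
  complex-linear subspaces of H.\<close>

definition hsub :: "('h::real_inner \<Rightarrow> 'h) \<Rightarrow> 'h set \<Rightarrow> bool" where
  "hsub J S \<longleftrightarrow> subspace S \<and> closed S \<and> J ` S \<subseteq> S"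

definition hjoin :: "('h::real_inner \<Rightarrow> 'h) \<Rightarrow> 'h set set \<Rightarrow> 'h set" where
  "hjoin J SS = \<Inter>{S. hsub J S \<and> \<Union>SS \<subseteq> S}"

definition hproj :: "'h::real_inner set \<Rightarrow> 'h \<Rightarrow> 'h" where
  "hproj S x = (THE y. y \<in> S \<and> (\<forall>z\<in>S. inner (x - y) z = 0))"

definition hsot_closed :: "('h::real_inner \<Rightarrow> 'h) \<Rightarrow> 'h set set \<Rightarrow> bool" where
  "hsot_closed J LL \<longleftrightarrow> (\<forall>S. hsub J S \<longrightarrow>
     (\<forall>F. finite F \<longrightarrow> (\<forall>e>0. \<exists>T\<in>LL. \<forall>x\<in>F. norm (hproj T x - hproj S x) < e)) \<longrightarrow> S \<in> LL)"

definition hsub_lattice :: "('h::real_inner \<Rightarrow> 'h) \<Rightarrow> 'h set set \<Rightarrow> bool" where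
  "hsub_lattice J LL \<longleftrightarrow> (\<forall>S\<in>LL. hsub J S) \<and> {0} \<in> LL \<and> UNIV \<in> LL \<and>
     (\<forall>S\<in>LL. \<forall>T\<in>LL. S \<inter> T \<in> LL \<and> hjoin J {S, T} \<in> LL) \<and> hsot_closed J LL"

text \<open>With V = complex and Jv = (*) i
  this is the separable infinite-dimensional complex Hilbert space K = l2;
  with V = H it is the Hilbert tensor product l2 \<otimes> H.\<close>

definition l2set :: "(nat \<Rightarrow> 'v::real_inner) set" where
  "l2set = {x. summable (\<lambda>n. (norm (x n))\<^sup>2)}"

definition l2dist :: "(nat \<Rightarrow> 'v::real_inner) \<Rightarrow> (nat \<Rightarrow> 'v) \<Rightarrow> real" where
  "l2dist x y = sqrt (\<Sum>n. (norm (x n - y n))\<^sup>2)"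

definition l2inner :: "(nat \<Rightarrow> 'v::real_inner) \<Rightarrow> (nat \<Rightarrow> 'v) \<Rightarrow> real" where
  "l2inner x y = (\<Sum>n. inner (x n) (y n))"

definition l2csub :: "('v::real_inner \<Rightarrow> 'v) \<Rightarrow> (nat \<Rightarrow> 'v) set \<Rightarrow> bool" where
  "l2csub Jv S \<longleftrightarrow> S \<subseteq> l2set \<and> (\<lambda>n. 0) \<in> S \<and>
     (\<forall>x\<in>S. \<forall>y\<in>S. (\<lambda>n. x n + y n) \<in> S) \<and>
     (\<forall>c. \<forall>x\<in>S. (\<lambda>n. c *\<^sub>R x n) \<in> S) \<and>
     (\<forall>x\<in>S. (\<lambda>n. Jv (x n)) \<in> S) \<and>
     (\<forall>x\<in>l2set. (\<forall>e>0. \<exists>y\<in>S. l2dist x y < e) \<longrightarrow> x \<in> S)"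

definition l2join :: "('v::real_inner \<Rightarrow> 'v) \<Rightarrow> (nat \<Rightarrow> 'v) set set \<Rightarrow> (nat \<Rightarrow> 'v) set" where
  "l2join Jv SS = \<Inter>{S. l2csub Jv S \<and> \<Union>SS \<subseteq> S}"

definition l2proj :: "(nat \<Rightarrow> 'v::real_inner) set \<Rightarrow> (nat \<Rightarrow> 'v) \<Rightarrow> (nat \<Rightarrow> 'v)" where
  "l2proj S x = (THE y. y \<in> S \<and> (\<forall>z\<in>S. l2inner (\<lambda>n. x n - y n) z = 0))"

definition l2sot_closed :: "('v::real_inner \<Rightarrow> 'v) \<Rightarrow> (nat \<Rightarrow> 'v) set set \<Rightarrow> bool" where
  "l2sot_closed Jv LL \<longleftrightarrow> (\<forall>S. l2csub Jv S \<longrightarrow>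
     (\<forall>F. finite F \<longrightarrow> F \<subseteq> l2set \<longrightarrow>
        (\<forall>e>0. \<exists>T\<in>LL. \<forall>x\<in>F. l2dist (l2proj T x) (l2proj S x) < e)) \<longrightarrow> S \<in> LL)"

definition l2sub_lattice :: "('v::real_inner \<Rightarrow> 'v) \<Rightarrow> (nat \<Rightarrow> 'v) set set \<Rightarrow> bool" where
  "l2sub_lattice Jv LL \<longleftrightarrow> (\<forall>S\<in>LL. l2csub Jv S) \<and> {\<lambda>n. 0} \<in> LL \<and> l2set \<in> LL \<and>
     (\<forall>S\<in>LL. \<forall>T\<in>LL. S \<inter> T \<in> LL \<and> l2join Jv {S, T} \<in> LL) \<and> l2sot_closed Jv LL"

definition JK :: "complex \<Rightarrow> complex" where
  "JK z = \<i> * z"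

text \<open>Elementary tensor a \<otimes> e in l2 \<otimes> H = l2(N; H): (a \<otimes> e)_n = a_n e
  (complex scalar acting through J).\<close>
definition tens_el :: "('h::real_inner \<Rightarrow> 'h) \<Rightarrow> (nat \<Rightarrow> complex) \<Rightarrow> 'h \<Rightarrow> (nat \<Rightarrow> 'h)" where
  "tens_el J a e = (\<lambda>n. Re (a n) *\<^sub>R e + Im (a n) *\<^sub>R J e)"

definition tens :: "('h::real_inner \<Rightarrow> 'h) \<Rightarrow> (nat \<Rightarrow> complex) set \<Rightarrow> 'h set \<Rightarrow> (nat \<Rightarrow> 'h) set" where
  "tens J F E = l2join J {{tens_el J a e | a e. a \<in> F \<and> e \<in> E}}"

definition theta :: "('h::real_inner \<Rightarrow> 'h) \<Rightarrow> 'h set set \<Rightarrow> ('h set \<Rightarrow> (nat \<Rightarrow> complex) set) \<Rightarrow> (nat \<Rightarrow> 'h) set" where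
  "theta J MM f = l2join J {tens J (f E) E | E. E \<in> MM}"

definition mjoin :: "'a set \<Rightarrow> ('a \<Rightarrow> 'h set \<Rightarrow> (nat \<Rightarrow> complex) set) \<Rightarrow> 'h set \<Rightarrow> (nat \<Rightarrow> complex) set" where
  "mjoin A f = (\<lambda>E. l2join JK ((\<lambda>\<alpha>. f \<alpha> E) ` A))"

end

theory Submission
  imports Defs
begin

text \<open>The inclusion of the join of the \<open>\<theta>(f\<^sub>\<alpha>)\<close> in \<open>\<theta>(\<Or>f\<^sub>\<alpha>)\<close> is monotonicity of
  \<open>\<theta>\<close>. For the converse, let \<open>S\<close> be a closed subspace of \<open>K \<otimes> H\<close> containing every
  \<open>\<theta>(f\<^sub>\<alpha>)\<close> and fix \<open>E \<in> \<M>\<close>. The vectors \<open>a \<in> K\<close> with \<open>a \<otimes> e \<in> S\<close> for all \<open>e \<in> E\<close>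
  form a closed subspace of \<open>K\<close>, because \<open>a \<mapsto> a \<otimes> e\<close> is linear and bounded by
  \<open>\<parallel>e\<parallel>\<close>. It contains every \<open>f\<^sub>\<alpha>(E)\<close>, hence their join, so \<open>(\<Or>f\<^sub>\<alpha>)(E) \<otimes> E \<subseteq> S\<close>.\<close>

lemma cplx_structure_inner_orth:
  assumes "cplx_structure J"
  shows "inner x (J x) = 0"
proof -
  have "inner (J x) (J (J x)) = inner x (J x)"
    using assms unfolding cplx_structure_def by blast
  moreover have "J (J x) = - x"
    using assms unfolding cplx_structure_def by blast
  ultimately show ?thesis by (simp add: inner_commute)
qed

lemma cplx_structure_norm:
  assumes "cplx_structure J"
  shows "norm (J x) = norm x"
  using assms unfolding cplx_structure_def by (simp add: norm_eq_sqrt_inner)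

lemma norm_tens_el:
  assumes "cplx_structure J"
  shows "norm (tens_el J a e n) = cmod (a n) * norm e"
proof -
  let ?x = "Re (a n)" and ?y = "Im (a n)"
  have "(norm (tens_el J a e n))\<^sup>2 = inner (?x *\<^sub>R e + ?y *\<^sub>R J e) (?x *\<^sub>R e + ?y *\<^sub>R J e)"
    by (simp add: tens_el_def power2_norm_eq_inner)
  also have "\<dots> = ?x\<^sup>2 * inner e e + ?y\<^sup>2 * inner (J e) (J e) + 2 * ?x * ?y * inner e (J e)"
    by (simp add: inner_add_left inner_add_right inner_commute power2_eq_square algebra_simps)
  also have "\<dots> = (?x\<^sup>2 + ?y\<^sup>2) * (norm e)\<^sup>2"
    using cplx_structure_inner_orth[OF assms] cplx_structure_norm[OF assms]
    by (simp add: power2_norm_eq_inner[symmetric] algebra_simps)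
  also have "\<dots> = (cmod (a n) * norm e)\<^sup>2"
    by (simp add: power_mult_distrib cmod_power2)
  finally show ?thesis by (simp add: power2_eq_imp_eq)
qed

lemma tens_el_diff: "tens_el J a e n - tens_el J b e n = tens_el J (\<lambda>n. a n - b n) e n"
  by (simp add: tens_el_def algebra_simps)

lemma l2set_add:
  fixes a b :: "nat \<Rightarrow> 'v::real_inner"
  assumes "a \<in> l2set" "b \<in> l2set"
  shows "(\<lambda>n. a n + b n) \<in> l2set"
proof -
  have bound: "(norm (x + y))\<^sup>2 \<le> 2 * (norm x)\<^sup>2 + 2 * (norm y)\<^sup>2" for x y :: 'v
  proof -
    have "(norm (x + y))\<^sup>2 \<le> (norm x + norm y)\<^sup>2"
      by (simp add: power_mono norm_triangle_ineq)
    also have "\<dots> \<le> 2 * (norm x)\<^sup>2 + 2 * (norm y)\<^sup>2"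
      using sum_squares_ge_zero[of "norm x - norm y" 0] by (simp add: power2_eq_square algebra_simps)
    finally show ?thesis .
  qed
  have "summable (\<lambda>n. 2 * (norm (a n))\<^sup>2 + 2 * (norm (b n))\<^sup>2)"
    using assms unfolding l2set_def by (intro summable_add summable_mult) auto
  then show ?thesis
    unfolding l2set_def mem_Collect_eq
    by (rule summable_comparison_test[rotated]) (use bound in auto)
qed

lemma l2set_norm_scaled:
  fixes a :: "nat \<Rightarrow> 'v::real_inner"
  assumes "a \<in> l2set" "\<And>n. norm (g n) = c * norm (a n)"
  shows "g \<in> l2set"
proof -
  have "summable (\<lambda>n. c\<^sup>2 * (norm (a n))\<^sup>2)"
    using assms(1) unfolding l2set_def by (intro summable_mult) auto
  then show ?thesis unfolding l2set_def using assms(2) by (simp add: power_mult_distrib)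
qed

lemma l2set_diff:
  fixes a b :: "nat \<Rightarrow> 'v::real_inner"
  assumes "a \<in> l2set" "b \<in> l2set"
  shows "(\<lambda>n. a n - b n) \<in> l2set"
  using l2set_add[OF assms(1) l2set_norm_scaled[OF assms(2), of "\<lambda>n. - b n" 1]] by simp

lemma l2dist_tens_el:
  assumes "cplx_structure J" "a \<in> l2set" "b \<in> l2set"
  shows "l2dist (tens_el J a e) (tens_el J b e) = norm e * l2dist a b"
proof -
  have sm: "summable (\<lambda>n. (norm (a n - b n))\<^sup>2)"
    using l2set_diff[OF assms(2,3)] by (simp add: l2set_def)
  have "(norm (tens_el J a e n - tens_el J b e n))\<^sup>2 = (norm e)\<^sup>2 * (norm (a n - b n))\<^sup>2" for n
    by (simp add: tens_el_diff norm_tens_el[OF assms(1)] power_mult_distrib)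
  then show ?thesis
    unfolding l2dist_def by (simp add: suminf_mult[OF sm] real_sqrt_mult)
qed

lemma l2dist_nonneg:
  assumes "a \<in> l2set" "b \<in> l2set"
  shows "0 \<le> l2dist a b"
  unfolding l2dist_def
  by (intro real_sqrt_ge_zero suminf_nonneg) (use l2set_diff[OF assms] in \<open>simp_all add: l2set_def\<close>)

lemma tens_el_l2set:
  assumes "cplx_structure J" "a \<in> l2set"
  shows "tens_el J a e \<in> l2set"
  by (rule l2set_norm_scaled[OF assms(2), of _ "norm e"]) (simp add: norm_tens_el[OF assms(1)] mult.commute)

lemma tens_el_mem_closed:
  assumes cs: "cplx_structure J" and S: "l2csub J S" and a: "a \<in> l2set"
    and approx: "\<forall>\<epsilon>>0. \<exists>b. b \<in> l2set \<and> tens_el J b e \<in> S \<and> l2dist a b < \<epsilon>"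
  shows "tens_el J a e \<in> S"
proof -
  have "\<exists>y\<in>S. l2dist (tens_el J a e) y < \<epsilon>" if "\<epsilon> > 0" for \<epsilon>
  proof -
    have pos: "norm e + 1 > 0" by (simp add: add_nonneg_pos)
    then have "\<epsilon> / (norm e + 1) > 0" using that by simp
    then obtain b where b: "b \<in> l2set" "tens_el J b e \<in> S"
      and d: "l2dist a b < \<epsilon> / (norm e + 1)"
      using approx by blast
    have "l2dist (tens_el J a e) (tens_el J b e) = norm e * l2dist a b"
      by (rule l2dist_tens_el[OF cs a b(1)])
    also have "\<dots> \<le> (norm e + 1) * l2dist a b"
      using l2dist_nonneg[OF a b(1)] by (intro mult_right_mono) simp_all
    also have "\<dots> < \<epsilon>"
      using d pos by (simp add: pos_less_divide_eq mult.commute)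
    finally show ?thesis using b(2) by blast
  qed
  then show ?thesis
    using S tens_el_l2set[OF cs a] unfolding l2csub_def by blast
qed

lemma l2csub_tens_el_preimage:
  assumes cs: "cplx_structure J" and S: "l2csub J S"
  shows "l2csub JK {a \<in> l2set. \<forall>e\<in>E. tens_el J a e \<in> S}" (is "l2csub JK ?P")
proof -
  have S0: "(\<lambda>n. 0) \<in> S"
    and S_add: "\<And>x y. x \<in> S \<Longrightarrow> y \<in> S \<Longrightarrow> (\<lambda>n. x n + y n) \<in> S"
    and S_scale: "\<And>c x. x \<in> S \<Longrightarrow> (\<lambda>n. c *\<^sub>R x n) \<in> S"
    and S_J: "\<And>x. x \<in> S \<Longrightarrow> (\<lambda>n. J (x n)) \<in> S"
    using S unfolding l2csub_def by auto
  have zero: "(\<lambda>n. 0) \<in> ?P"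
  proof -
    have "tens_el J (\<lambda>n. 0) e = (\<lambda>n. 0)" for e by (simp add: tens_el_def)
    then show ?thesis using S0 by (simp add: l2set_def)
  qed
  have add: "(\<lambda>n. a n + b n) \<in> ?P" if "a \<in> ?P" "b \<in> ?P" for a b
  proof -
    have "tens_el J (\<lambda>n. a n + b n) e = (\<lambda>n. tens_el J a e n + tens_el J b e n)" for e
      by (simp add: tens_el_def algebra_simps)
    then show ?thesis using that l2set_add S_add by auto
  qed
  have scale: "(\<lambda>n. c *\<^sub>R a n) \<in> ?P" if "a \<in> ?P" for c a
  proof -
    have "tens_el J (\<lambda>n. c *\<^sub>R a n) e = (\<lambda>n. c *\<^sub>R tens_el J a e n)" for e
      by (simp add: tens_el_def algebra_simps)
    moreover have "(\<lambda>n. c *\<^sub>R a n) \<in> l2set"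
      by (rule l2set_norm_scaled[of a _ "\<bar>c\<bar>"]) (use that in auto)
    ultimately show ?thesis using that S_scale by auto
  qed
  have JK_closed: "(\<lambda>n. JK (a n)) \<in> ?P" if "a \<in> ?P" for a
  proof -
    have "linear J" "\<And>x. J (J x) = - x" using cs unfolding cplx_structure_def by auto
    then have "tens_el J (\<lambda>n. JK (a n)) e = (\<lambda>n. J (tens_el J a e n))" for e
      by (simp add: tens_el_def JK_def linear_add linear_scale algebra_simps)
    moreover have "(\<lambda>n. JK (a n)) \<in> l2set"
      by (rule l2set_norm_scaled[of a _ 1]) (use that in \<open>auto simp: JK_def norm_mult\<close>)
    ultimately show ?thesis using that S_J by auto
  qed
  have closed: "a \<in> ?P" if a: "a \<in> l2set" and approx: "\<forall>\<epsilon>>0. \<exists>b\<in>?P. l2dist a b < \<epsilon>" for a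
  proof -
    have "tens_el J a e \<in> S" if "e \<in> E" for e
      by (rule tens_el_mem_closed[OF cs S a]) (use approx that in blast)
    then show ?thesis using a by simp
  qed
  show ?thesis
    unfolding l2csub_def
    by (intro conjI ballI allI impI)
      (simp_all add: zero add scale JK_closed closed Collect_restrict del: mem_Collect_eq)
qed

lemma l2join_upper: "X \<in> SS \<Longrightarrow> X \<subseteq> l2join Jv SS"
  unfolding l2join_def by auto

lemma l2join_least: "l2csub Jv S \<Longrightarrow> \<Union>SS \<subseteq> S \<Longrightarrow> l2join Jv SS \<subseteq> S"
  unfolding l2join_def by auto

lemma l2join_subset:
  assumes "\<And>S. l2csub Jv S \<Longrightarrow> \<Union>SS \<subseteq> S \<Longrightarrow> \<Union>TT \<subseteq> S"
  shows "l2join Jv TT \<subseteq> l2join Jv SS"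
  using assms unfolding l2join_def by blast

lemma tens_mono: "F \<subseteq> G \<Longrightarrow> tens J F E \<subseteq> tens J G E"
  unfolding tens_def by (rule l2join_subset) blast

lemma tens_l2join_least:
  assumes "cplx_structure J" "l2csub J S"
    and "\<And>F. F \<in> FF \<Longrightarrow> F \<subseteq> l2set" "\<And>F. F \<in> FF \<Longrightarrow> tens J F E \<subseteq> S"
  shows "tens J (l2join JK FF) E \<subseteq> S"
proof -
  have "F \<subseteq> {a \<in> l2set. \<forall>e\<in>E. tens_el J a e \<in> S}" if F: "F \<in> FF" for F
  proof
    fix a assume a: "a \<in> F"
    have "tens_el J a e \<in> tens J F E" if "e \<in> E" for e
      unfolding tens_def by (rule subsetD[OF l2join_upper[OF singletonI]]) (use a that in blast)
    then show "a \<in> {a \<in> l2set. \<forall>e\<in>E. tens_el J a e \<in> S}"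
      using assms(3,4)[OF F] a by blast
  qed
  then have "l2join JK FF \<subseteq> {a \<in> l2set. \<forall>e\<in>E. tens_el J a e \<in> S}"
    by (intro l2join_least[OF l2csub_tens_el_preimage[OF assms(1,2)]] Union_least)
  then show ?thesis
    unfolding tens_def by (intro l2join_least[OF assms(2)]) blast
qed

lemma tens_subset_theta: "E \<in> MM \<Longrightarrow> tens J (f E) E \<subseteq> theta J MM f"
  unfolding theta_def by (rule l2join_upper) blast

lemma theta_mono:
  assumes "\<And>E. E \<in> MM \<Longrightarrow> f E \<subseteq> g E"
  shows "theta J MM f \<subseteq> theta J MM g"
  unfolding theta_def
proof (rule l2join_subset)
  fix S assume "\<Union>{tens J (g E) E |E. E \<in> MM} \<subseteq> S"
  moreover have "tens J (f E) E \<subseteq> tens J (g E) E" if "E \<in> MM" for E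
    by (rule tens_mono[OF assms[OF that]])
  ultimately show "\<Union>{tens J (f E) E |E. E \<in> MM} \<subseteq> S" by blast
qed

theorem proposition3p1:
  fixes J :: "'h::{real_inner, complete_space} \<Rightarrow> 'h"
    and M :: "'h set set"
    and L :: "(nat \<Rightarrow> complex) set set"
    and A :: "'a set"
    and f :: "'a \<Rightarrow> 'h set \<Rightarrow> (nat \<Rightarrow> complex) set"
  assumes "cplx_structure J"
    and "hsub_lattice J M"
    and "l2sub_lattice JK L"
    and "\<forall>\<alpha>\<in>A. f \<alpha> \<in> M \<rightarrow> L"
  shows "theta J M (mjoin A f) = l2join J ((\<lambda>\<alpha>. theta J M (f \<alpha>)) ` A)"
proof
  show "l2join J ((\<lambda>\<alpha>. theta J M (f \<alpha>)) ` A) \<subseteq> theta J M (mjoin A f)"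
    unfolding theta_def[of J M "mjoin A f"]
  proof (rule l2join_subset)
    fix S assume S: "l2csub J S" "\<Union>{tens J (mjoin A f E) E |E. E \<in> M} \<subseteq> S"
    have "theta J M (f \<alpha>) \<subseteq> theta J M (mjoin A f)" if "\<alpha> \<in> A" for \<alpha>
      unfolding mjoin_def by (rule theta_mono, rule l2join_upper) (use that in blast)
    moreover have "theta J M (mjoin A f) \<subseteq> S"
      unfolding theta_def by (rule l2join_least[OF S])
    ultimately show "\<Union>((\<lambda>\<alpha>. theta J M (f \<alpha>)) ` A) \<subseteq> S" by blast
  qed
  show "theta J M (mjoin A f) \<subseteq> l2join J ((\<lambda>\<alpha>. theta J M (f \<alpha>)) ` A)"
    unfolding theta_def[of J M "mjoin A f"]
  proof (rule l2join_subset)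
    fix S assume S: "l2csub J S" "\<Union>((\<lambda>\<alpha>. theta J M (f \<alpha>)) ` A) \<subseteq> S"
    have "tens J (mjoin A f E) E \<subseteq> S" if E: "E \<in> M" for E
    proof -
      have "f \<alpha> E \<subseteq> l2set \<and> tens J (f \<alpha> E) E \<subseteq> S" if "\<alpha> \<in> A" for \<alpha>
      proof
        have "f \<alpha> E \<in> L" using assms(4) E that by blast
        then show "f \<alpha> E \<subseteq> l2set" using assms(3) by (simp add: l2sub_lattice_def l2csub_def)
        show "tens J (f \<alpha> E) E \<subseteq> S"
          using tens_subset_theta[OF E, of J "f \<alpha>"] S(2) that by blast
      qed
      then show ?thesis
        unfolding mjoin_def by (intro tens_l2join_least[OF assms(1) S(1)]) auto
    qed
    then show "\<Union>{tens J (mjoin A f E) E |E. E \<in> M} \<subseteq> S" by blast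
  qed
qed

end
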